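(* Let $(X,\mathsf{d}_X)$ be a compact metric space and $\mathfrak{A}=\bigoplus_{k=0}^n M_{m_k}(\mathbb{C})$ ($n\in\mathbb{N}$, $m_k\ge1$). Let $\|\cdot\|_{\mathsf{n}}$ be a norm on $\mathfrak{A}$ (over $\mathbb{R}$ or $\mathbb{C}$) with $M,N>0$ such that $M\|\cdot\|_{\mathsf{n}}\le\|\cdot\|_{\mathfrak{A}}\le N\|\cdot\|_{\mathsf{n}}$. Let $v=(v_0,\dots,v_n)$ with $v_k\in[0,1]$, $\sum_kv_k=1$, and let $\mathsf{tr}^{\mathfrak{A}}_v$ be the state $(a^k)_k\mapsto\sum_{k=0}^n\frac{v_k}{m_k}\mathrm{Tr}(a^k)$. Then $\Delta:=\Delta^{\mathfrak{A}}_{\mathsf{tr}^{\mathfrak{A}}_v}:(X,\mathsf{d}_X)\to(\mathscr{S}(C(X,\mathfrak{A})),\mathrm{mk}_{\mathsf{L}^{(\mathsf{n}),q}_{\mathsf{d}_X}})$ is bi-Lipschitz; specifically, for all $x,y\in X$, writing $D=\mathrm{diam}(X,\mathsf{d}_X)$ and $m_q(x,y)=\mathrm{mk}_{\mathsf{L}^{(\mathsf{n}),q}_{\mathsf{d}_X}}(\Delta(x),\Delta(y))$: (1) if $q=C(X)$: $M\mathsf{d}_X(x,y)\le m_q(x,y)\le N\mathsf{d}_X(x,y)$; (2) if $q=\mathbb{C}$: (a) if $MD\le1$, $M\mathsf{d}_X(x,y)\le m_q(x,y)\le N\mathsf{d}_X(x,y)$; (b) if $MD>1$, $\frac1D\mathsf{d}_X(x,y)\le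 m_q(x,y)\le N\mathsf{d}_X(x,y)$; (3) if $q=\mu$ for a state $\mu$ of $C(X,\mathfrak{A})$: (a) if $2MD\le1$, $M\mathsf{d}_X(x,y)\le m_q(x,y)\le N\mathsf{d}_X(x,y)$; (b) if $2MD>1$, $\frac1{2D}\mathsf{d}_X(x,y)\le m_q(x,y)\le N\mathsf{d}_X(x,y)$.
   Context: For a state $\phi$ of $\mathfrak{A}$, $\Delta^{\mathfrak{A}}_\phi(x)$ is the state $a\mapsto\phi(a(x))$ of $C(X,\mathfrak{A})$ (continuous $\mathfrak{A}$-valued functions, supremum norm). $C(X,\mathbb{C}1_{\mathfrak{A}})$: $\mathbb{C}1_{\mathfrak{A}}$-valued functions. $l^{(\mathsf{n})}_{\mathsf{d}_X}(a)=\sup_{x\ne y}\|a(x)-a(y)\|_{\mathsf{n}}/\mathsf{d}_X(x,y)$; $\mathsf{L}^{(\mathsf{n}),C(X)}_{\mathsf{d}_X}(a)=\max\{l^{(\mathsf{n})}_{\mathsf{d}_X}(a),\inf_{b\in C(X,\mathbb{C}1_{\mathfrak{A}})}\|a-b\|\}$, $\mathsf{L}^{(\mathsf{n}),\mathbb{C}}_{\mathsf{d}_X}(a)=\max\{l^{(\mathsf{n})}_{\mathsf{d}_X}(a),\inf_{\lambda\in\mathbb{C}}\|a-\lambda1\|\}$, $\mathsf{L}^{(\mathsf{n}),\mu}_{\mathsf{d}_X}(a)=\max\{l^{(\mathsf{n})}_{\mathsf{d}_X}(a),\|a-\mu(a)1\|\}$. $\mathrm{mk}_{\mathsf{L}}(\varphi,\psi)=\sup\{|\varphi(a)-\psi(a)|:a=a^*,\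 \mathsf{L}(a)\le1\}$. $\mathrm{diam}(X,\mathsf{d}_X)=\sup_{x,y}\mathsf{d}_X(x,y)$. *)

theory Defs
  imports "HOL-Analysis.Analysis" "HOL-Library.Extended_Real"
begin

text \<open>Elements of the finite-dimensional C*-algebra
  A = M_{m 0}(C) (+) ... (+) M_{m n}(C) are encoded as functions
  a k i j (block k, row i, column j), vanishing outside the blocks.\<close>

type_synonym blk = "nat \<Rightarrow> nat \<Rightarrow> nat \<Rightarrow> complex"

definition in_alg :: "nat \<Rightarrow> (nat \<Rightarrow> nat) \<Rightarrow> blk \<Rightarrow> bool" where
  "in_alg n m a \<longleftrightarrow> (\<forall>k i j. (n < k \<or> m k \<le> i \<or> m k \<le> j) \<longrightarrow> a k i j = 0)"

definition alg_add :: "blk \<Rightarrow> blk \<Rightarrow> blk" where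
  "alg_add a b = (\<lambda>k i j. a k i j + b k i j)"

definition alg_diff :: "blk \<Rightarrow> blk \<Rightarrow> blk" where
  "alg_diff a b = (\<lambda>k i j. a k i j - b k i j)"

definition alg_scale :: "complex \<Rightarrow> blk \<Rightarrow> blk" where
  "alg_scale c a = (\<lambda>k i j. c * a k i j)"

definition alg_mult :: "nat \<Rightarrow> (nat \<Rightarrow> nat) \<Rightarrow> blk \<Rightarrow> blk \<Rightarrow> blk" where
  "alg_mult n m a b = (\<lambda>k i j. if k \<le> n \<and> i < m k \<and> j < m k
      then (\<Sum>l<m k. a k i l * b k l j) else 0)"

definition alg_adj :: "blk \<Rightarrow> blk" where
  "alg_adj a = (\<lambda>k i j. cnj (a k j i))"

definition alg_one :: "nat \<Rightarrow> (nat \<Rightarrow> nat) \<Rightarrow> blk" where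
  "alg_one n m = (\<lambda>k i j. if k \<le> n \<and> i < m k \<and> i = j then 1 else 0)"

definition blk_opnorm :: "(nat \<Rightarrow> nat) \<Rightarrow> nat \<Rightarrow> blk \<Rightarrow> real" where
  "blk_opnorm m k a = (SUP v \<in> {v :: nat \<Rightarrow> complex. (\<Sum>i<m k. (cmod (v i))\<^sup>2) = 1}.
      sqrt (\<Sum>i<m k. (cmod (\<Sum>j<m k. a k i j * v j))\<^sup>2))"

definition cstar_norm :: "nat \<Rightarrow> (nat \<Rightarrow> nat) \<Rightarrow> blk \<Rightarrow> real" where
  "cstar_norm n m a = Max ((\<lambda>k. blk_opnorm m k a) ` {..n})"

definition blk_trace :: "(nat \<Rightarrow> nat) \<Rightarrow> nat \<Rightarrow> blk \<Rightarrow> complex" where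
  "blk_trace m k a = (\<Sum>i<m k. a k i i)"

definition tr_v :: "nat \<Rightarrow> (nat \<Rightarrow> nat) \<Rightarrow> (nat \<Rightarrow> real) \<Rightarrow> blk \<Rightarrow> complex" where
  "tr_v n m v a = (\<Sum>k\<le>n. complex_of_real (v k / real (m k)) * blk_trace m k a)"

text \<open>A norm on A as a real vector space (a complex norm is in particular one).\<close>
definition is_alg_norm :: "nat \<Rightarrow> (nat \<Rightarrow> nat) \<Rightarrow> (blk \<Rightarrow> real) \<Rightarrow> bool" where
  "is_alg_norm n m nrm \<longleftrightarrow>
     (\<forall>a. in_alg n m a \<longrightarrow> nrm a \<ge> 0) \<and>
     (\<forall>a. in_alg n m a \<longrightarrow> nrm a = 0 \<longrightarrow> a = (\<lambda>k i j. 0)) \<and>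
     (\<forall>a b. in_alg n m a \<longrightarrow> in_alg n m b \<longrightarrow> nrm (alg_add a b) \<le> nrm a + nrm b) \<and>
     (\<forall>a (r::real). in_alg n m a \<longrightarrow> nrm (alg_scale (complex_of_real r) a) = \<bar>r\<bar> * nrm a)"

text \<open>C(X,A): norm-continuous A-valued functions on the compact metric space X
  (X is the whole type 'x).\<close>
definition CXA :: "nat \<Rightarrow> (nat \<Rightarrow> nat) \<Rightarrow> ('x::metric_space \<Rightarrow> blk) set" where
  "CXA n m = {a. (\<forall>x. in_alg n m (a x)) \<and>
     (\<forall>x. \<forall>\<epsilon>>0. \<exists>\<delta>>0. \<forall>y. dist y x < \<delta> \<longrightarrow> cstar_norm n m (alg_diff (a y) (a x)) < \<epsilon>)}"

definition sup_norm :: "nat \<Rightarrow> (nat \<Rightarrow> nat) \<Rightarrow> ('x \<Rightarrow> blk) \<Rightarrow> real" where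
  "sup_norm n m a = (SUP x. cstar_norm n m (a x))"

definition fun_diff :: "('x \<Rightarrow> blk) \<Rightarrow> ('x \<Rightarrow> blk) \<Rightarrow> ('x \<Rightarrow> blk)" where
  "fun_diff a b = (\<lambda>x. alg_diff (a x) (b x))"

definition fun_one :: "nat \<Rightarrow> (nat \<Rightarrow> nat) \<Rightarrow> ('x \<Rightarrow> blk)" where
  "fun_one n m = (\<lambda>x. alg_one n m)"

definition fun_adj :: "('x \<Rightarrow> blk) \<Rightarrow> ('x \<Rightarrow> blk)" where
  "fun_adj a = (\<lambda>x. alg_adj (a x))"

definition CX_scalar :: "nat \<Rightarrow> (nat \<Rightarrow> nat) \<Rightarrow> ('x::metric_space \<Rightarrow> blk) set" where
  "CX_scalar n m = {(\<lambda>x. alg_scale (c x) (alg_one n m)) | c :: 'x \<Rightarrow> complex. continuous_on UNIV c}"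

definition is_state :: "nat \<Rightarrow> (nat \<Rightarrow> nat) \<Rightarrow> (('x::metric_space \<Rightarrow> blk) \<Rightarrow> complex) \<Rightarrow> bool" where
  "is_state n m \<phi> \<longleftrightarrow>
     (\<forall>a\<in>CXA n m. \<forall>b\<in>CXA n m. \<phi> (\<lambda>x. alg_add (a x) (b x)) = \<phi> a + \<phi> b) \<and>
     (\<forall>a\<in>CXA n m. \<forall>c. \<phi> (\<lambda>x. alg_scale c (a x)) = c * \<phi> a) \<and>
     (\<forall>b\<in>CXA n m. Im (\<phi> (\<lambda>x. alg_mult n m (alg_adj (b x)) (b x))) = 0 \<and>
                  Re (\<phi> (\<lambda>x. alg_mult n m (alg_adj (b x)) (b x))) \<ge> 0) \<and>
     \<phi> (fun_one n m) = 1"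

definition Delta :: "(blk \<Rightarrow> complex) \<Rightarrow> 'x \<Rightarrow> ('x \<Rightarrow> blk) \<Rightarrow> complex" where
  "Delta \<phi> x = (\<lambda>a. \<phi> (a x))"

definition lip :: "(blk \<Rightarrow> real) \<Rightarrow> ('x::metric_space \<Rightarrow> blk) \<Rightarrow> ereal" where
  "lip nrm a = (SUP p \<in> {p :: 'x \<times> 'x. fst p \<noteq> snd p}.
       ereal (nrm (alg_diff (a (fst p)) (a (snd p))) / dist (fst p) (snd p)))"

definition L_CX :: "nat \<Rightarrow> (nat \<Rightarrow> nat) \<Rightarrow> (blk \<Rightarrow> real) \<Rightarrow> ('x::metric_space \<Rightarrow> blk) \<Rightarrow> ereal" where
  "L_CX n m nrm a = max (lip nrm a)
      (ereal (Inf {sup_norm n m (fun_diff a b) | b. b \<in> CX_scalar n m}))"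

definition L_C :: "nat \<Rightarrow> (nat \<Rightarrow> nat) \<Rightarrow> (blk \<Rightarrow> real) \<Rightarrow> ('x::metric_space \<Rightarrow> blk) \<Rightarrow> ereal" where
  "L_C n m nrm a = max (lip nrm a)
      (ereal (Inf {sup_norm n m (fun_diff a (\<lambda>x. alg_scale c (alg_one n m))) | c. True}))"

definition L_mu :: "nat \<Rightarrow> (nat \<Rightarrow> nat) \<Rightarrow> (blk \<Rightarrow> real) \<Rightarrow> (('x::metric_space \<Rightarrow> blk) \<Rightarrow> complex)
    \<Rightarrow> ('x \<Rightarrow> blk) \<Rightarrow> ereal" where
  "L_mu n m nrm \<mu> a = max (lip nrm a)
      (ereal (sup_norm n m (fun_diff a (\<lambda>x. alg_scale (\<mu> a) (alg_one n m)))))"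

definition mk :: "nat \<Rightarrow> (nat \<Rightarrow> nat) \<Rightarrow> (('x::metric_space \<Rightarrow> blk) \<Rightarrow> ereal)
    \<Rightarrow> (('x \<Rightarrow> blk) \<Rightarrow> complex) \<Rightarrow> (('x \<Rightarrow> blk) \<Rightarrow> complex) \<Rightarrow> ereal" where
  "mk n m L \<phi> \<psi> = (SUP a \<in> {a \<in> CXA n m. fun_adj a = a \<and> L a \<le> 1}.
       ereal (cmod (\<phi> a - \<psi> a)))"

end

(* Upper bound: if L a <= 1 then the Lipschitz seminorm gives |a x - a y|_n <= d(x,y); the
   trace state is dominated by the C*-norm (diagonal entries are bounded by the block operator
   norms), and the C*-norm is at most N |.|_n.
   Lower bound: the scalar test element a_s z = s d(x,z) 1 separates Delta x and Delta y by
   exactly s d(x,y), and its Lipschitz seminorm is s |1|_n <= s / M, so s = M is admissible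
   for q = C(X), where the quotient term vanishes on scalar functions. For q = C and q = mu
   the quotient term is at most s D (subtract 0, resp. mu a_s, which positivity of mu places
   in [0, s D]), so one needs in addition s D <= 1; this leads to s = M or s = 1 / (c D). *)

theory Submission
  imports Defs
begin

lemma bdd_above_blk_opnorm_image:
  "bdd_above ((\<lambda>v. sqrt (\<Sum>i<m k. (cmod (\<Sum>j<m k. a k i j * v j))\<^sup>2)) `
      {v :: nat \<Rightarrow> complex. (\<Sum>i<m k. (cmod (v i))\<^sup>2) = 1})"
proof (rule bdd_aboveI2)
  fix v :: "nat \<Rightarrow> complex" assume "v \<in> {v. (\<Sum>i<m k. (cmod (v i))\<^sup>2) = 1}"
  hence unit: "(\<Sum>i<m k. (cmod (v i))\<^sup>2) = 1" by simp
  have coord_le_1: "cmod (v j) \<le> 1" if "j < m k" for j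
  proof -
    have "(cmod (v j))\<^sup>2 \<le> (\<Sum>i<m k. (cmod (v i))\<^sup>2)"
      by (rule member_le_sum) (use that in auto)
    thus ?thesis using unit by (simp add: power_le_one_iff abs_square_le_1)
  qed
  have "cmod (\<Sum>j<m k. a k i j * v j) \<le> (\<Sum>j<m k. cmod (a k i j))" for i
    by (rule order_trans[OF norm_sum sum_mono])
       (use coord_le_1 in \<open>auto simp: norm_mult intro: mult_left_le\<close>)
  hence "(\<Sum>i<m k. (cmod (\<Sum>j<m k. a k i j * v j))\<^sup>2) \<le> (\<Sum>i<m k. (\<Sum>j<m k. cmod (a k i j))\<^sup>2)"
    by (intro sum_mono power_mono) auto
  thus "sqrt (\<Sum>i<m k. (cmod (\<Sum>j<m k. a k i j * v j))\<^sup>2)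
      \<le> sqrt (\<Sum>i<m k. (\<Sum>j<m k. cmod (a k i j))\<^sup>2)"
    by simp
qed

lemma sum_sq_norm_basis_vector:
  "j < (N::nat) \<Longrightarrow> (\<Sum>l<N. (cmod (if l = j then 1 else 0 :: complex))\<^sup>2) = 1"
  by (simp add: if_distrib[of "\<lambda>z. (cmod z)\<^sup>2"] sum.delta' cong: if_cong)

lemma norm_entry_le_blk_opnorm:
  assumes "i < m k" "j < m k"
  shows "cmod (a k i j) \<le> blk_opnorm m k a"
proof -
  let ?e = "\<lambda>l. if l = j then 1 else 0 :: complex"
  have column: "(\<Sum>l<m k. a k i' l * ?e l) = a k i' j" for i'
    using assms(2) by (simp add: if_distrib[of "(*) _"] cong: if_cong)
  have "cmod (a k i j) = sqrt ((cmod (a k i j))\<^sup>2)" by simp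
  also have "\<dots> \<le> sqrt (\<Sum>i'<m k. (cmod (a k i' j))\<^sup>2)"
    by (intro real_sqrt_le_mono member_le_sum) (use assms(1) in auto)
  also have "\<dots> \<le> blk_opnorm m k a"
    unfolding blk_opnorm_def
    by (rule cSUP_upper2[OF bdd_above_blk_opnorm_image, of ?e])
       (simp_all add: sum_sq_norm_basis_vector assms(2) column)
  finally show ?thesis .
qed

lemma blk_opnorm_le_cstar_norm: "k \<le> n \<Longrightarrow> blk_opnorm m k a \<le> cstar_norm n m a"
  unfolding cstar_norm_def by (rule Max_ge) auto

lemma blk_opnorm_scale_one:
  assumes "1 \<le> m k" "k \<le> n"
  shows "blk_opnorm m k (alg_scale c (alg_one n m)) = cmod c"
proof -
  let ?S = "{v :: nat \<Rightarrow> complex. (\<Sum>i<m k. (cmod (v i))\<^sup>2) = 1}"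
  have "sqrt (\<Sum>i<m k. (cmod (\<Sum>j<m k. alg_scale c (alg_one n m) k i j * v j))\<^sup>2) = cmod c"
    if "v \<in> ?S" for v
  proof -
    have "(\<Sum>j<m k. alg_scale c (alg_one n m) k i j * v j) = c * v i" if "i < m k" for i
    proof -
      have "(\<Sum>j<m k. alg_scale c (alg_one n m) k i j * v j) = (\<Sum>j<m k. if j = i then c * v i else 0)"
        by (rule sum.cong) (use that assms(2) in \<open>auto simp: alg_scale_def alg_one_def\<close>)
      thus ?thesis using that by simp
    qed
    hence "(\<Sum>i<m k. (cmod (\<Sum>j<m k. alg_scale c (alg_one n m) k i j * v j))\<^sup>2)
        = (\<Sum>i<m k. (cmod c)\<^sup>2 * (cmod (v i))\<^sup>2)"
      by (intro sum.cong) (simp_all add: norm_mult power_mult_distrib)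
    also have "\<dots> = (cmod c)\<^sup>2 * (\<Sum>i<m k. (cmod (v i))\<^sup>2)"
      by (rule sum_distrib_left[symmetric])
    finally show ?thesis using that by simp
  qed
  hence "blk_opnorm m k (alg_scale c (alg_one n m)) = (SUP v\<in>?S. cmod c)"
    unfolding blk_opnorm_def by (intro SUP_cong) auto
  also have "\<dots> = cmod c"
  proof (rule cSUP_const)
    have "(\<lambda>l. if l = 0 then 1 else 0) \<in> ?S"
      using sum_sq_norm_basis_vector[of 0 "m k"] assms(1) by (simp add: Suc_le_eq)
    thus "?S \<noteq> {}" by (metis empty_iff)
  qed
  finally show ?thesis .
qed

lemma cstar_norm_scale_one:
  assumes "\<forall>k\<le>n. 1 \<le> m k"
  shows "cstar_norm n m (alg_scale c (alg_one n m)) = cmod c"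
proof -
  have "(\<lambda>k. blk_opnorm m k (alg_scale c (alg_one n m))) ` {..n} = {cmod c}"
    using blk_opnorm_scale_one assms by force
  thus ?thesis unfolding cstar_norm_def by simp
qed

lemma cstar_norm_one: "\<forall>k\<le>n. 1 \<le> m k \<Longrightarrow> cstar_norm n m (alg_one n m) = 1"
  using cstar_norm_scale_one[of n m 1] by (simp add: alg_scale_def)

lemma in_alg_scale_one: "in_alg n m (alg_scale c (alg_one n m))"
  by (auto simp: in_alg_def alg_scale_def alg_one_def)

lemma alg_diff_scale: "alg_diff (alg_scale c a) (alg_scale d a) = alg_scale (c - d) a"
  by (simp add: alg_diff_def alg_scale_def algebra_simps)

lemma in_alg_one: "in_alg n m (alg_one n m)"
  by (auto simp: in_alg_def alg_one_def)

lemma alg_norm_nonneg: "is_alg_norm n m nrm \<Longrightarrow> in_alg n m a \<Longrightarrow> 0 \<le> nrm a"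
  by (simp add: is_alg_norm_def)

lemma alg_norm_scale_real:
  "is_alg_norm n m nrm \<Longrightarrow> in_alg n m a \<Longrightarrow> nrm (alg_scale (of_real r) a) = \<bar>r\<bar> * nrm a"
  by (simp add: is_alg_norm_def)

lemma tr_v_diff: "tr_v n m v (alg_diff a b) = tr_v n m v a - tr_v n m v b"
  unfolding tr_v_def blk_trace_def alg_diff_def
  by (simp add: sum_subtractf right_diff_distrib)

lemma tr_v_scale_one:
  assumes "\<forall>k\<le>n. 1 \<le> m k" "(\<Sum>k\<le>n. v k) = 1"
  shows "tr_v n m v (alg_scale c (alg_one n m)) = c"
proof -
  have "blk_trace m k (alg_scale c (alg_one n m)) = of_nat (m k) * c" if "k \<le> n" for k
    using that by (simp add: blk_trace_def alg_scale_def alg_one_def)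
  hence "tr_v n m v (alg_scale c (alg_one n m)) = (\<Sum>k\<le>n. complex_of_real (v k) * c)"
    unfolding tr_v_def using assms(1) by (intro sum.cong) (auto simp: of_real_divide field_simps)
  also have "\<dots> = c" using assms(2) by (simp flip: sum_distrib_right of_real_sum)
  finally show ?thesis .
qed

lemma norm_tr_v_le_cstar_norm:
  assumes "\<forall>k\<le>n. 1 \<le> m k" "\<forall>k\<le>n. 0 \<le> v k" "(\<Sum>k\<le>n. v k) = 1"
  shows "cmod (tr_v n m v a) \<le> cstar_norm n m a"
proof -
  have trace_le: "cmod (blk_trace m k a) \<le> real (m k) * cstar_norm n m a" if "k \<le> n" for k
  proof -
    have "cmod (blk_trace m k a) \<le> (\<Sum>i<m k. cmod (a k i i))"
      unfolding blk_trace_def by (rule norm_sum)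
    also have "\<dots> \<le> (\<Sum>i<m k. cstar_norm n m a)"
      by (rule sum_mono)
         (meson norm_entry_le_blk_opnorm blk_opnorm_le_cstar_norm that order_trans lessThan_iff)
    finally show ?thesis by simp
  qed
  have "cmod (tr_v n m v a) \<le> (\<Sum>k\<le>n. v k / real (m k) * cmod (blk_trace m k a))"
    unfolding tr_v_def
    by (rule order_trans[OF norm_sum], rule sum_mono)
       (use assms(2) in \<open>simp only: norm_mult norm_of_real, simp\<close>)
  also have "\<dots> \<le> (\<Sum>k\<le>n. v k / real (m k) * (real (m k) * cstar_norm n m a))"
    using trace_le assms(2) by (intro sum_mono mult_left_mono) auto
  also have "\<dots> = (\<Sum>k\<le>n. v k) * cstar_norm n m a"
    unfolding sum_distrib_right using assms(1) by (intro sum.cong) auto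
  finally show ?thesis using assms(3) by simp
qed

definition scalar_fun :: "nat \<Rightarrow> (nat \<Rightarrow> nat) \<Rightarrow> ('x \<Rightarrow> complex) \<Rightarrow> 'x \<Rightarrow> blk" where
  "scalar_fun n m f = (\<lambda>z. alg_scale (f z) (alg_one n m))"

lemma scalar_fun_in_CXA:
  assumes "\<forall>k\<le>n. 1 \<le> m k" "continuous_on UNIV f"
  shows "scalar_fun n m (f :: 'x::metric_space \<Rightarrow> complex) \<in> CXA n m"
  unfolding CXA_def scalar_fun_def
proof (intro CollectI conjI allI impI in_alg_scale_one)
  fix x :: 'x and e :: real assume "0 < e"
  then obtain d where "d > 0" "\<forall>y. dist y x < d \<longrightarrow> dist (f y) (f x) < e"
    using assms(2) unfolding continuous_on_iff by blast
  thus "\<exists>d>0. \<forall>y. dist y x < d \<longrightarrow>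
      cstar_norm n m (alg_diff (alg_scale (f y) (alg_one n m)) (alg_scale (f x) (alg_one n m))) < e"
    using assms(1) by (auto simp: alg_diff_scale cstar_norm_scale_one dist_norm)
qed

lemma fun_adj_scalar_fun_of_real:
  "fun_adj (scalar_fun n m (\<lambda>z. of_real (g z))) = scalar_fun n m (\<lambda>z. of_real (g z))"
  by (auto simp: fun_adj_def scalar_fun_def alg_adj_def alg_scale_def alg_one_def fun_eq_iff)

lemma fun_diff_scalar_fun:
  "fun_diff (scalar_fun n m f) (scalar_fun n m g) = scalar_fun n m (\<lambda>z. f z - g z)"
  by (simp add: fun_diff_def scalar_fun_def alg_diff_scale)

lemma sup_norm_scalar_fun:
  "\<forall>k\<le>n. 1 \<le> m k \<Longrightarrow> sup_norm n m (scalar_fun n m f) = (SUP z. cmod (f z))"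
  by (simp add: sup_norm_def scalar_fun_def cstar_norm_scale_one)

lemma sup_norm_scalar_fun_nonneg:
  assumes "compact (UNIV :: 'x::metric_space set)" "\<forall>k\<le>n. 1 \<le> m k"
    and "continuous_on UNIV (f :: 'x \<Rightarrow> complex)"
  shows "0 \<le> sup_norm n m (scalar_fun n m f)"
proof -
  have "bounded (range f)"
    by (intro compact_imp_bounded compact_continuous_image assms(1,3))
  then obtain B where "\<forall>z. cmod (f z) \<le> B" unfolding bounded_iff by blast
  hence "bdd_above (range (\<lambda>z. cmod (f z)))" by (auto intro: bdd_aboveI2[where M = B])
  thus ?thesis
    unfolding sup_norm_scalar_fun[OF assms(2)] by (rule cSUP_upper2[of _ _ undefined]) auto
qed

lemma sup_norm_scalar_fun_le:
  "\<forall>k\<le>n. 1 \<le> m k \<Longrightarrow> (\<And>z. cmod (f z) \<le> B) \<Longrightarrow> sup_norm n m (scalar_fun n m f) \<le> B"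
  by (simp add: sup_norm_scalar_fun cSUP_least)

lemma Delta_tr_v_scalar_fun:
  "\<forall>k\<le>n. 1 \<le> m k \<Longrightarrow> (\<Sum>k\<le>n. v k) = 1 \<Longrightarrow> Delta (tr_v n m v) x (scalar_fun n m f) = f x"
  by (simp add: Delta_def scalar_fun_def tr_v_scale_one)

lemma lip_le_iff:
  "lip nrm a \<le> ereal K \<longleftrightarrow> (\<forall>x y. x \<noteq> y \<longrightarrow> nrm (alg_diff (a x) (a y)) \<le> K * dist x y)"
  by (auto simp: lip_def SUP_le_iff pos_divide_le_eq)

lemma lip_scalar_fun_of_real_le:
  assumes "is_alg_norm n m nrm" "\<And>x y. \<bar>g x - g y\<bar> \<le> K * dist x y"
  shows "lip nrm (scalar_fun n m (\<lambda>z. of_real (g z))) \<le> ereal (K * nrm (alg_one n m))"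
  unfolding lip_le_iff
proof (intro allI impI)
  fix x y
  let ?a = "scalar_fun n m (\<lambda>z. of_real (g z))"
  have "nrm (alg_diff (?a x) (?a y)) = \<bar>g x - g y\<bar> * nrm (alg_one n m)"
    unfolding scalar_fun_def alg_diff_scale of_real_diff[symmetric]
    by (rule alg_norm_scale_real[OF assms(1) in_alg_one])
  also have "\<dots> \<le> K * nrm (alg_one n m) * dist x y"
    using assms(2)[of x y] alg_norm_nonneg[OF assms(1) in_alg_one]
    by (metis mult.commute mult.left_commute mult_left_mono)
  finally show "nrm (alg_diff (?a x) (?a y)) \<le> K * nrm (alg_one n m) * dist x y" .
qed

lemma CX_scalar_eq: "CX_scalar n m = {scalar_fun n m c | c. continuous_on UNIV c}"
  by (simp add: CX_scalar_def scalar_fun_def)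

lemma L_CX_scalar_fun:
  assumes "compact (UNIV :: 'x::metric_space set)" "\<forall>k\<le>n. 1 \<le> m k"
    and "continuous_on UNIV (f :: 'x \<Rightarrow> complex)"
  shows "L_CX n m nrm (scalar_fun n m f) = max (lip nrm (scalar_fun n m f)) 0"
proof -
  let ?S = "{sup_norm n m (fun_diff (scalar_fun n m f) b) | b. b \<in> CX_scalar n m}"
  have "Inf ?S = 0"
  proof (rule cInf_eq_minimum)
    have "sup_norm n m (fun_diff (scalar_fun n m f) (scalar_fun n m f)) = 0"
      by (simp add: fun_diff_scalar_fun sup_norm_scalar_fun[OF assms(2)])
    thus "0 \<in> ?S" using assms(3) unfolding CX_scalar_eq by fastforce
    show "0 \<le> r" if "r \<in> ?S" for r
      using that assms unfolding CX_scalar_eq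
      by (auto simp: fun_diff_scalar_fun intro!: sup_norm_scalar_fun_nonneg continuous_intros)
  qed
  thus ?thesis by (simp add: L_CX_def zero_ereal_def)
qed

lemma L_C_scalar_fun_le:
  assumes "compact (UNIV :: 'x::metric_space set)" "\<forall>k\<le>n. 1 \<le> m k"
    and "continuous_on UNIV (f :: 'x \<Rightarrow> complex)" "\<And>z. cmod (f z) \<le> B"
  shows "L_C n m nrm (scalar_fun n m f) \<le> max (lip nrm (scalar_fun n m f)) (ereal B)"
proof -
  have diff_const: "fun_diff (scalar_fun n m f) (\<lambda>x. alg_scale c (alg_one n m))
      = scalar_fun n m (\<lambda>z. f z - c)" for c
    by (simp add: fun_diff_def scalar_fun_def alg_diff_scale)
  let ?S = "{sup_norm n m (fun_diff (scalar_fun n m f) (\<lambda>x. alg_scale c (alg_one n m))) | c. True}"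
  have "Inf ?S \<le> B"
  proof (rule cInf_lower2)
    show "sup_norm n m (scalar_fun n m (\<lambda>z. f z - 0)) \<in> ?S"
      unfolding diff_const[symmetric] by blast
    show "sup_norm n m (scalar_fun n m (\<lambda>z. f z - 0)) \<le> B"
      using assms(2,4) by (simp add: sup_norm_scalar_fun_le)
    show "bdd_below ?S"
      using assms(1-3) unfolding diff_const
      by (auto intro!: bdd_belowI[of _ 0] sup_norm_scalar_fun_nonneg continuous_intros)
  qed
  thus ?thesis unfolding L_C_def by (metis ereal_less_eq(3) max.mono order_refl)
qed

lemma alg_mult_scale_one:
  "alg_mult n m (alg_scale c (alg_one n m)) (alg_scale d (alg_one n m)) = alg_scale (c * d) (alg_one n m)"
proof -
  have "(\<Sum>l<m k. alg_scale c (alg_one n m) k i l * alg_scale d (alg_one n m) k l j)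
     = (if i = j then c * d else 0)" if "k \<le> n" "i < m k" for k i j
  proof -
    have "(\<Sum>l<m k. alg_scale c (alg_one n m) k i l * alg_scale d (alg_one n m) k l j)
       = (\<Sum>l<m k. if l = i then (if i = j then c * d else 0) else 0)"
      by (rule sum.cong) (use that in \<open>auto simp: alg_scale_def alg_one_def\<close>)
    thus ?thesis using that by simp
  qed
  thus ?thesis by (auto simp: alg_mult_def alg_scale_def alg_one_def fun_eq_iff)
qed

lemma alg_adj_scale_of_real_one:
  "alg_adj (alg_scale (of_real r) (alg_one n m)) = alg_scale (of_real r) (alg_one n m)"
  by (auto simp: alg_adj_def alg_scale_def alg_one_def fun_eq_iff)

lemma
  assumes "is_state n m \<mu>"
  shows state_add:
      "a \<in> CXA n m \<Longrightarrow> b \<in> CXA n m \<Longrightarrow> \<mu> (\<lambda>x. alg_add (a x) (b x)) = \<mu> a + \<mu> b"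
    and state_scale: "a \<in> CXA n m \<Longrightarrow> \<mu> (\<lambda>x. alg_scale c (a x)) = c * \<mu> a"
    and state_positive: "b \<in> CXA n m \<Longrightarrow>
      Im (\<mu> (\<lambda>x. alg_mult n m (alg_adj (b x)) (b x))) = 0 \<and>
      0 \<le> Re (\<mu> (\<lambda>x. alg_mult n m (alg_adj (b x)) (b x)))"
    and state_unital: "\<mu> (fun_one n m) = 1"
  using assms unfolding is_state_def by blast+

lemma state_scalar_fun_linear:
  assumes "is_state n m \<mu>" "\<forall>k\<le>n. 1 \<le> m k"
    and "continuous_on UNIV f" "continuous_on UNIV g"
  shows "\<mu> (scalar_fun n m (\<lambda>z. a * f z + b * g z))
      = a * \<mu> (scalar_fun n m f) + b * \<mu> (scalar_fun n m g)"
proof -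
  have scale: "scalar_fun n m (\<lambda>z. c * h z) = (\<lambda>x. alg_scale c (scalar_fun n m h x))" for c h
    by (simp add: scalar_fun_def alg_scale_def fun_eq_iff)
  have split: "scalar_fun n m (\<lambda>z. a * f z + b * g z)
      = (\<lambda>x. alg_add (scalar_fun n m (\<lambda>z. a * f z) x) (scalar_fun n m (\<lambda>z. b * g z) x))"
    by (simp add: scalar_fun_def alg_add_def alg_scale_def fun_eq_iff algebra_simps)
  have "scalar_fun n m (\<lambda>z. a * f z) \<in> CXA n m" "scalar_fun n m (\<lambda>z. b * g z) \<in> CXA n m"
    using assms(2-4) by (auto intro!: scalar_fun_in_CXA continuous_intros)
  hence "\<mu> (scalar_fun n m (\<lambda>z. a * f z + b * g z))
      = \<mu> (scalar_fun n m (\<lambda>z. a * f z)) + \<mu> (scalar_fun n m (\<lambda>z. b * g z))"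
    unfolding split by (rule state_add[OF assms(1)])
  thus ?thesis
    unfolding scale using assms(2-4) by (simp add: state_scale[OF assms(1)] scalar_fun_in_CXA)
qed

lemma state_scalar_fun_const:
  assumes "is_state n m \<mu>" "\<forall>k\<le>n. 1 \<le> m k"
  shows "\<mu> (scalar_fun n m (\<lambda>_. c)) = c"
proof -
  have one: "fun_one n m = scalar_fun n m (\<lambda>_. 1)"
    by (simp add: fun_one_def scalar_fun_def alg_scale_def)
  have const: "scalar_fun n m (\<lambda>_. c) = (\<lambda>x. alg_scale c (fun_one n m x))"
    by (simp add: scalar_fun_def fun_one_def alg_scale_def fun_eq_iff)
  have "\<mu> (\<lambda>x. alg_scale c (fun_one n m x)) = c * \<mu> (fun_one n m)"
    unfolding one by (rule state_scale[OF assms(1) scalar_fun_in_CXA[OF assms(2) continuous_on_const]])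
  thus ?thesis unfolding const by (simp add: state_unital[OF assms(1)])
qed

lemma state_scalar_fun_of_real_nonneg:
  assumes "is_state n m \<mu>" "\<forall>k\<le>n. 1 \<le> m k"
    and "continuous_on UNIV g" "\<And>z. 0 \<le> g z"
  shows "Im (\<mu> (scalar_fun n m (\<lambda>z. of_real (g z)))) = 0 \<and> 0 \<le> Re (\<mu> (scalar_fun n m (\<lambda>z. of_real (g z))))"
proof -
  let ?b = "scalar_fun n m (\<lambda>z. of_real (sqrt (g z)))"
  have "(\<lambda>x. alg_mult n m (alg_adj (?b x)) (?b x)) = scalar_fun n m (\<lambda>z. of_real (g z))"
    using assms(4) by (simp add: scalar_fun_def alg_adj_scale_of_real_one alg_mult_scale_one flip: of_real_mult)
  moreover have "?b \<in> CXA n m"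
    using assms(2,3) by (intro scalar_fun_in_CXA continuous_intros)
  ultimately show ?thesis using state_positive[OF assms(1)] by metis
qed

lemma state_scalar_fun_of_real_between:
  assumes "is_state n m \<mu>" "\<forall>k\<le>n. 1 \<le> m k"
    and "continuous_on UNIV g" "\<And>z. 0 \<le> g z" "\<And>z. g z \<le> B"
  shows "\<exists>t. \<mu> (scalar_fun n m (\<lambda>z. of_real (g z))) = of_real t \<and> 0 \<le> t \<and> t \<le> B"
proof -
  let ?t = "Re (\<mu> (scalar_fun n m (\<lambda>z. of_real (g z))))"
  have g: "Im (\<mu> (scalar_fun n m (\<lambda>z. of_real (g z)))) = 0" "0 \<le> ?t"
    using state_scalar_fun_of_real_nonneg[OF assms(1-4)] by auto
  have "\<mu> (scalar_fun n m (\<lambda>z. of_real B * 1 + (-1) * of_real (g z)))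
      = of_real B * \<mu> (scalar_fun n m (\<lambda>_. 1)) + (-1) * \<mu> (scalar_fun n m (\<lambda>z. of_real (g z)))"
    using assms(3) by (intro state_scalar_fun_linear[OF assms(1,2)] continuous_intros)
  hence "\<mu> (scalar_fun n m (\<lambda>z. of_real (B - g z))) = of_real B - \<mu> (scalar_fun n m (\<lambda>z. of_real (g z)))"
    by (simp add: state_scalar_fun_const[OF assms(1,2)])
  moreover have "0 \<le> Re (\<mu> (scalar_fun n m (\<lambda>z. of_real (B - g z))))"
  proof (rule conjunct2[OF state_scalar_fun_of_real_nonneg[OF assms(1,2)]])
    show "continuous_on UNIV (\<lambda>z. B - g z)" using assms(3) by (intro continuous_intros)
    show "0 \<le> B - g z" for z using assms(5)[of z] by simp
  qed
  ultimately have "?t \<le> B" by simp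
  thus ?thesis using g by (intro exI[of _ ?t]) (simp add: complex_eq_iff)
qed

lemma L_mu_scalar_fun_of_real_le:
  assumes "is_state n m \<mu>" "\<forall>k\<le>n. 1 \<le> m k"
    and "continuous_on UNIV g" "\<And>z. 0 \<le> g z" "\<And>z. g z \<le> B"
  shows "L_mu n m nrm \<mu> (scalar_fun n m (\<lambda>z. of_real (g z)))
      \<le> max (lip nrm (scalar_fun n m (\<lambda>z. of_real (g z)))) (ereal B)"
proof -
  obtain t where t: "\<mu> (scalar_fun n m (\<lambda>z. of_real (g z))) = of_real t" "0 \<le> t" "t \<le> B"
    using state_scalar_fun_of_real_between[OF assms] by blast
  have diff: "fun_diff (scalar_fun n m (\<lambda>z. of_real (g z))) (\<lambda>x. alg_scale (of_real t) (alg_one n m))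
      = scalar_fun n m (\<lambda>z. of_real (g z - t))"
    by (simp add: fun_diff_def scalar_fun_def alg_diff_scale)
  have bound: "sup_norm n m (scalar_fun n m (\<lambda>z. of_real (g z - t))) \<le> B"
  proof (rule sup_norm_scalar_fun_le[OF assms(2)])
    fix z
    have "\<bar>g z - t\<bar> \<le> B" using assms(4,5)[of z] t(2,3) by (simp add: abs_le_iff)
    thus "cmod (of_real (g z - t)) \<le> B" by (simp only: norm_of_real)
  qed
  show ?thesis
    unfolding L_mu_def t(1) diff by (rule max.mono[OF order_refl]) (use bound in simp)
qed

lemma mk_Delta_tr_v_le:
  assumes "\<forall>k\<le>n. 1 \<le> m k" "\<forall>k\<le>n. 0 \<le> v k" "(\<Sum>k\<le>n. v k) = 1"
    and "\<forall>a. in_alg n m a \<longrightarrow> cstar_norm n m a \<le> N * nrm a" "0 \<le> N"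
    and "\<And>a. L a \<le> 1 \<Longrightarrow> lip nrm a \<le> 1"
  shows "mk n m L (Delta (tr_v n m v) x) (Delta (tr_v n m v) y) \<le> ereal (N * dist x y)"
  unfolding mk_def
proof (rule SUP_least)
  fix a assume "a \<in> {a \<in> CXA n m. fun_adj a = a \<and> L a \<le> 1}"
  hence in_alg: "in_alg n m (alg_diff (a x) (a y))" and lip: "lip nrm a \<le> ereal 1"
    using assms(6) by (auto simp: CXA_def in_alg_def alg_diff_def one_ereal_def)
  have "cmod (Delta (tr_v n m v) x a - Delta (tr_v n m v) y a) \<le> N * dist x y"
  proof (cases "x = y")
    case False
    have "cmod (Delta (tr_v n m v) x a - Delta (tr_v n m v) y a) = cmod (tr_v n m v (alg_diff (a x) (a y)))"
      by (simp add: Delta_def tr_v_diff)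
    also have "\<dots> \<le> cstar_norm n m (alg_diff (a x) (a y))"
      by (rule norm_tr_v_le_cstar_norm[OF assms(1-3)])
    also have "\<dots> \<le> N * nrm (alg_diff (a x) (a y))" using assms(4) in_alg by blast
    also have "\<dots> \<le> N * dist x y"
      using lip False assms(5) unfolding lip_le_iff by (simp add: mult_left_mono)
    finally show ?thesis .
  qed simp
  thus "ereal (cmod (Delta (tr_v n m v) x a - Delta (tr_v n m v) y a)) \<le> ereal (N * dist x y)"
    by simp
qed

lemma mk_Delta_tr_v_ge:
  assumes "\<forall>k\<le>n. 1 \<le> m k" "(\<Sum>k\<le>n. v k) = 1" "0 \<le> s"
    and "L (scalar_fun n m (\<lambda>z. of_real (s * dist x z))) \<le> 1"
  shows "ereal (s * dist x y) \<le> mk n m L (Delta (tr_v n m v) x) (Delta (tr_v n m v) y)"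
  unfolding mk_def
proof (rule SUP_upper2)
  let ?a = "scalar_fun n m (\<lambda>z. of_real (s * dist x z))"
  have "?a \<in> CXA n m" by (rule scalar_fun_in_CXA[OF assms(1)]) (intro continuous_intros)
  moreover have "fun_adj ?a = ?a" by (rule fun_adj_scalar_fun_of_real)
  ultimately show "?a \<in> {a \<in> CXA n m. fun_adj a = a \<and> L a \<le> 1}" using assms(4) by blast
  show "ereal (s * dist x y) \<le> ereal (cmod (Delta (tr_v n m v) x ?a - Delta (tr_v n m v) y ?a))"
    using assms(3) by (simp add: Delta_tr_v_scalar_fun[OF assms(1,2)] norm_mult)
qed

lemma mk_Delta_tr_v_ge_cases:
  assumes "\<forall>k\<le>n. 1 \<le> m k" "(\<Sum>k\<le>n. v k) = 1" "0 < M" "0 \<le> D" "1 \<le> c"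
    and test: "\<And>s. 0 \<le> s \<Longrightarrow> s \<le> M \<Longrightarrow> s * D \<le> 1 \<Longrightarrow>
      L (scalar_fun n m (\<lambda>z. of_real (s * dist x z))) \<le> 1"
  shows "c * M * D \<le> 1 \<Longrightarrow>
      ereal (M * dist x y) \<le> mk n m L (Delta (tr_v n m v) x) (Delta (tr_v n m v) y)"
    and "c * M * D > 1 \<Longrightarrow>
      ereal (dist x y / (c * D)) \<le> mk n m L (Delta (tr_v n m v) x) (Delta (tr_v n m v) y)"
proof -
  assume "c * M * D \<le> 1"
  moreover have "M * D \<le> c * M * D"
    using mult_right_mono[OF assms(5), of "M * D"] assms(3,4) by (simp add: mult.assoc)
  ultimately have "M * D \<le> 1" by linarith
  thus "ereal (M * dist x y) \<le> mk n m L (Delta (tr_v n m v) x) (Delta (tr_v n m v) y)"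
    using assms(3) by (intro mk_Delta_tr_v_ge[OF assms(1,2)] test) auto
next
  assume "c * M * D > 1"
  hence cD: "c * D > 0" using assms(3-5) by (cases "D = 0") auto
  hence "1 / (c * D) \<le> M" "1 / (c * D) * D \<le> 1"
    using \<open>c * M * D > 1\<close> assms(5) by (simp_all add: divide_le_eq mult_ac)
  hence "ereal (1 / (c * D) * dist x y) \<le> mk n m L (Delta (tr_v n m v) x) (Delta (tr_v n m v) y)"
    using cD by (intro mk_Delta_tr_v_ge[OF assms(1,2)] test) auto
  thus "ereal (dist x y / (c * D)) \<le> mk n m L (Delta (tr_v n m v) x) (Delta (tr_v n m v) y)"
    by simp
qed

lemma
  fixes x :: "'x::metric_space"
  assumes "compact (UNIV :: 'x set)" "\<forall>k\<le>n. 1 \<le> m k" "is_alg_norm n m nrm"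
    and "M * nrm (alg_one n m) \<le> 1" "0 \<le> s" "s \<le> M"
  defines "a \<equiv> scalar_fun n m (\<lambda>z. of_real (s * dist x z))"
  shows L_CX_scaled_dist_le_1: "L_CX n m nrm a \<le> 1"
    and L_C_scaled_dist_le_1: "s * diameter (UNIV :: 'x set) \<le> 1 \<Longrightarrow> L_C n m nrm a \<le> 1"
    and L_mu_scaled_dist_le_1:
      "s * diameter (UNIV :: 'x set) \<le> 1 \<Longrightarrow> is_state n m \<mu> \<Longrightarrow> L_mu n m nrm \<mu> a \<le> 1"
proof -
  have "\<bar>s * dist x p - s * dist x q\<bar> \<le> s * dist p q" for p q
  proof -
    have "\<bar>s * dist x p - s * dist x q\<bar> = s * \<bar>dist p x - dist x q\<bar>"
      using assms(5) by (simp add: abs_mult dist_commute flip: right_diff_distrib)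
    also have "\<dots> \<le> s * dist p q" using assms(5) abs_dist_diff_le by (rule mult_left_mono[rotated])
    finally show ?thesis .
  qed
  hence "lip nrm a \<le> ereal (s * nrm (alg_one n m))"
    unfolding a_def by (rule lip_scalar_fun_of_real_le[OF assms(3)])
  also have "s * nrm (alg_one n m) \<le> 1"
    using assms(4,6) alg_norm_nonneg[OF assms(3) in_alg_one] by (meson mult_right_mono order_trans)
  finally have lip: "lip nrm a \<le> 1" by (simp add: one_ereal_def)
  have cont: "continuous_on UNIV (\<lambda>z. s * dist x z)" by (intro continuous_intros)
  have "s * dist x z \<le> s * diameter (UNIV :: 'x set)" for z
    using assms(1,5) by (intro mult_left_mono diameter_bounded_bound compact_imp_bounded) auto
  hence bound: "0 \<le> s * dist x z \<and> s * dist x z \<le> s * diameter (UNIV :: 'x set)" for z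
    using assms(5) by simp
  show "L_CX n m nrm a \<le> 1"
    unfolding a_def L_CX_scalar_fun[OF assms(1,2) continuous_on_of_real[OF cont]]
    using lip a_def by simp
  show "L_C n m nrm a \<le> 1" if "s * diameter (UNIV :: 'x set) \<le> 1"
  proof -
    have "L_C n m nrm a \<le> max (lip nrm a) (ereal (s * diameter (UNIV :: 'x set)))"
      unfolding a_def
    proof (rule L_C_scalar_fun_le[OF assms(1,2) continuous_on_of_real[OF cont]])
      show "cmod (of_real (s * dist x z)) \<le> s * diameter (UNIV :: 'x set)" for z
        using bound[of z] by (simp only: norm_of_real abs_of_nonneg)
    qed
    also have "\<dots> \<le> 1" using lip that by simp
    finally show ?thesis .
  qed
  show "L_mu n m nrm \<mu> a \<le> 1" if "s * diameter (UNIV :: 'x set) \<le> 1" "is_state n m \<mu>"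
  proof -
    have "L_mu n m nrm \<mu> a \<le> max (lip nrm a) (ereal (s * diameter (UNIV :: 'x set)))"
      unfolding a_def using bound by (intro L_mu_scalar_fun_of_real_le[OF that(2) assms(2) cont]) auto
    also have "\<dots> \<le> 1" using lip that(1) by simp
    finally show ?thesis .
  qed
qed

theorem theorem3p7:
  fixes n :: nat and m :: "nat \<Rightarrow> nat" and v :: "nat \<Rightarrow> real"
    and nrm :: "blk \<Rightarrow> real" and M N :: real
  assumes X_compact: "compact (UNIV :: 'x::metric_space set)"
    and m_pos: "\<forall>k\<le>n. 1 \<le> m k"
    and nrm_norm: "is_alg_norm n m nrm"
    and M_pos: "0 < M" and N_pos: "0 < N"
    and equiv: "\<forall>a. in_alg n m a \<longrightarrow> M * nrm a \<le> cstar_norm n m a \<and> cstar_norm n m a \<le> N * nrm a"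
    and v_range: "\<forall>k\<le>n. 0 \<le> v k \<and> v k \<le> 1"
    and v_sum: "(\<Sum>k\<le>n. v k) = 1"
  defines "D \<equiv> diameter (UNIV :: 'x set)"
    and "\<Delta> \<equiv> Delta (tr_v n m v)"
  shows
    "\<forall>x y :: 'x.
       \<comment> \<open>(1) q = C(X)\<close>
       (ereal (M * dist x y) \<le> mk n m (L_CX n m nrm) (\<Delta> x) (\<Delta> y) \<and>
        mk n m (L_CX n m nrm) (\<Delta> x) (\<Delta> y) \<le> ereal (N * dist x y)) \<and>
       \<comment> \<open>(2) q = C\<close>
       (M * D \<le> 1 \<longrightarrow>
          ereal (M * dist x y) \<le> mk n m (L_C n m nrm) (\<Delta> x) (\<Delta> y) \<and>
          mk n m (L_C n m nrm) (\<Delta> x) (\<Delta> y) \<le> ereal (N * dist x y)) \<and>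
       (M * D > 1 \<longrightarrow>
          ereal (dist x y / D) \<le> mk n m (L_C n m nrm) (\<Delta> x) (\<Delta> y) \<and>
          mk n m (L_C n m nrm) (\<Delta> x) (\<Delta> y) \<le> ereal (N * dist x y)) \<and>
       \<comment> \<open>(3) q = mu, for every state mu of C(X,A)\<close>
       (\<forall>\<mu>. is_state n m \<mu> \<longrightarrow>
          (2 * M * D \<le> 1 \<longrightarrow>
             ereal (M * dist x y) \<le> mk n m (L_mu n m nrm \<mu>) (\<Delta> x) (\<Delta> y) \<and>
             mk n m (L_mu n m nrm \<mu>) (\<Delta> x) (\<Delta> y) \<le> ereal (N * dist x y)) \<and>
          (2 * M * D > 1 \<longrightarrow>
             ereal (dist x y / (2 * D)) \<le> mk n m (L_mu n m nrm \<mu>) (\<Delta> x) (\<Delta> y) \<and>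
             mk n m (L_mu n m nrm \<mu>) (\<Delta> x) (\<Delta> y) \<le> ereal (N * dist x y)))"
proof (intro allI, goal_cases)
  case (1 x y)
  have "M * nrm (alg_one n m) \<le> 1" using equiv in_alg_one cstar_norm_one[OF m_pos] by metis
  note L_CX_le = L_CX_scaled_dist_le_1[OF X_compact m_pos nrm_norm this]
    and L_C_le = L_C_scaled_dist_le_1[OF X_compact m_pos nrm_norm this, folded D_def]
    and L_mu_le = L_mu_scaled_dist_le_1[OF X_compact m_pos nrm_norm this, folded D_def]
  have D_nonneg: "0 \<le> D" unfolding D_def by (intro diameter_ge_0 compact_imp_bounded X_compact)
  note lower = mk_Delta_tr_v_ge_cases[OF m_pos v_sum M_pos D_nonneg]
  have "ereal (M * dist x y) \<le> mk n m (L_CX n m nrm) (\<Delta> x) (\<Delta> y)"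
    unfolding \<Delta>_def using M_pos by (intro mk_Delta_tr_v_ge[OF m_pos v_sum] L_CX_le) auto
  moreover have "M * D \<le> 1 \<Longrightarrow> ereal (M * dist x y) \<le> mk n m (L_C n m nrm) (\<Delta> x) (\<Delta> y)"
    and "M * D > 1 \<Longrightarrow> ereal (dist x y / D) \<le> mk n m (L_C n m nrm) (\<Delta> x) (\<Delta> y)"
    unfolding \<Delta>_def using lower[where c = 1 and L = "L_C n m nrm", OF _ L_C_le] by simp_all
  moreover have "2 * M * D \<le> 1 \<Longrightarrow> ereal (M * dist x y) \<le> mk n m (L_mu n m nrm \<mu>) (\<Delta> x) (\<Delta> y)"
    and "2 * M * D > 1 \<Longrightarrow> ereal (dist x y / (2 * D)) \<le> mk n m (L_mu n m nrm \<mu>) (\<Delta> x) (\<Delta> y)"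
    if "is_state n m \<mu>" for \<mu>
    unfolding \<Delta>_def using lower[where c = 2 and L = "L_mu n m nrm \<mu>", OF _ L_mu_le[OF _ _ _ that]]
    by simp_all
  moreover have "mk n m L (\<Delta> x) (\<Delta> y) \<le> ereal (N * dist x y)"
    if "L \<in> {L_CX n m nrm, L_C n m nrm} \<union> range (L_mu n m nrm)" for L
    unfolding \<Delta>_def using m_pos v_range v_sum equiv N_pos that
    by (intro mk_Delta_tr_v_le) (auto simp: L_CX_def L_C_def L_mu_def)
  ultimately show ?case by simp
qed

end
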